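(* Fix a formula $A$. For all annotated unary contexts $\Gamma\{-\}$, $\Delta\{-\}$ and every finite set of formulas $\Sigma$: if $\vdash^A \Gamma\{\Delta\{\Diamond A^\perp_\Sigma\}\}$, then $\vdash^A \Gamma\{\Delta\{\},\Diamond A^\perp_\Sigma\}$.
   Context: Formulas: over a countable set of atoms $\alpha$ with duals $\alpha^\perp$, $A,B ::= \alpha \mid \alpha^\perp \mid A\land B \mid A\lor B \mid \Box A \mid \Diamond A$; negation $A^\perp$ by De Morgan duality ($(\alpha)^\perp=\alpha^\perp$, $(\alpha^\perp)^\perp=\alpha$, $\land/\lor$ dual, $(\Box A)^\perp=\Diamond A^\perp$, $(\Diamond A)^\perp=\Box A^\perp$). Annotated sequents: $\Gamma,\Delta ::= \cdot \mid \Gamma, C \mid \Gamma, \Diamond A_\Sigma \mid \Gamma,[\Delta]_B$, where $C$ is a formula not of the form $\Diamond A$, $\Sigma$ is a finite set of formulas (annotation set) and $B$ a formula (bracket annotation); sequents are taken up to exchange. Annotated unary contexts $\Gamma\{-\}$ (one hole) are defined analogously, $\Gamma\{\Delta\}$ is hole-filling, $\Gamma\{\}=\Gamma\{\cdot\}$. Annotated rules (whenever an active formula in a premise is a $\Diamond$-formula, its annotation is simply discarded): (id) $\Gamma\{\alpha^\perp,\alpha\}$, provided every $\Diamond$-formula occurrence in it has annotation $\emptyset$; ($\land$) from $\Gamma_1\{A\}$ and $\Gamma_2\{B\}$ infer $\Gamma\{A\land B\}$; ($\lor$) from $\Gamma\{A,B\}$ infer $\Gamma\{A\lor B\}$; ($\Box$)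 from $\Gamma\{[\Diamond A^\perp_\Sigma, A]_A\}$ infer $\Gamma\{\Box A\}$; ($\Diamond$) from $\Gamma\{\Delta\{[\Delta',A]_B\},\Diamond A_\Sigma\}$ infer $\Gamma\{\Delta\{[\Delta']_B\},\Diamond A_{\Sigma\cup\{B\}}\}$ (for any unary context $\Delta\{-\}$, possibly of depth $0$); (cut) from $\Gamma_1\{A\}$ and $\Gamma_2\{A^\perp\}$ infer $\Gamma\{\}$. In the two-premise rules, $\Gamma_1\{-\},\Gamma_2\{-\},\Gamma\{-\}$ are identical except for annotation sets of $\Diamond$-formula occurrences (bracket annotations coincide), and each $\Diamond$-formula occurrence in $\Gamma\{-\}$ has as annotation the union of the annotations of the corresponding occurrences in $\Gamma_1,\Gamma_2$. Fix a formula $A$; $\vdash^A\Gamma$ means the annotated sequent $\Gamma$ is derivable with the annotated rules (id), ($\land$), ($\lor$), ($\Box$), ($\Diamond$) together with those instances of (cut) whose cut formula is $A$ (premises $\Gamma_1\{A\}$, $\Gamma_2\{A^\perp\}$). Convention: annotations not displayed in a statement (on $\Diamond$-formulas or brackets of contexts) are arbitrary; bracket annotations are the same in hypothesis and conclusion, while undisplayed $\Diamond$-annotations in the conclusion are existentially quantified. *)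

theory Defs
  imports Main "HOL-Library.Multiset" "HOL-Library.FSet"
begin

datatype fm = At nat | NAt nat | And fm fm | Or fm fm | Box fm | Dia fm

primrec neg :: "fm \<Rightarrow> fm" where
  "neg (At a) = NAt a"
| "neg (NAt a) = At a"
| "neg (And A B) = Or (neg A) (neg B)"
| "neg (Or A B) = And (neg A) (neg B)"
| "neg (Box A) = Dia (neg A)"
| "neg (Dia A) = Box (neg A)"

text \<open>F C is a formula not of the form Dia _,
 D A S is Dia A with annotation S, Br M B is the bracket [M]_B.
 Sequents are multisets of items (exchange).\<close>

datatype 'a item = F fm | D fm 'a | Br "'a item multiset" fm

type_synonym aitem = "fm fset item"
type_synonym aseq = "aitem multiset"

text \<open>Unary context: Hole M is the context M, {-};  InBr M c B is M, [c]_B.\<close>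
datatype 'a ctx = Hole "'a item multiset" | InBr "'a item multiset" "'a ctx" fm

type_synonym actx = "fm fset ctx"

primrec fill :: "'a ctx \<Rightarrow> 'a item multiset \<Rightarrow> 'a item multiset" where
  "fill (Hole M) N = M + N"
| "fill (InBr M c B) N = add_mset (Br (fill c N) B) M"

inductive wf_item :: "'a item \<Rightarrow> bool" where
  "(\<And>A. C \<noteq> Dia A) \<Longrightarrow> wf_item (F C)"
| "wf_item (D A S)"
| "(\<forall>x\<in>#M. wf_item x) \<Longrightarrow> wf_item (Br M B)"

definition wf_seq :: "'a item multiset \<Rightarrow> bool" where
  "wf_seq M = (\<forall>x\<in>#M. wf_item x)"

primrec wf_ctx :: "'a ctx \<Rightarrow> bool" where
  "wf_ctx (Hole M) = wf_seq M"
| "wf_ctx (InBr M c B) = (wf_seq M \<and> wf_ctx c)"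

definition fmi :: "fm \<Rightarrow> fm fset \<Rightarrow> aitem" where
  "fmi A S = (case A of Dia B \<Rightarrow> D B S | _ \<Rightarrow> F A)"

definition erase_seq :: "aseq \<Rightarrow> aseq" where
  "erase_seq M = image_mset (map_item (\<lambda>_. {||})) M"

definition erase_ctx :: "actx \<Rightarrow> actx" where
  "erase_ctx c = map_ctx (\<lambda>_. {||}) c"

text \<open>Merging for two-premise rules: identical except Dia-annotations; the result
 carries the union of the annotations.\<close>
inductive mi :: "aitem \<Rightarrow> aitem \<Rightarrow> aitem \<Rightarrow> bool"
  and msm :: "aseq \<Rightarrow> aseq \<Rightarrow> aseq \<Rightarrow> bool" where
  "mi (F C) (F C) (F C)"
| "mi (D A S1) (D A S2) (D A (S1 |\<union>| S2))"
| "msm M1 M2 M \<Longrightarrow> mi (Br M1 B) (Br M2 B) (Br M B)"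
| "msm {#} {#} {#}"
| "mi a b c \<Longrightarrow> msm M1 M2 M \<Longrightarrow> msm (add_mset a M1) (add_mset b M2) (add_mset c M)"

inductive mctx :: "actx \<Rightarrow> actx \<Rightarrow> actx \<Rightarrow> bool" where
  "msm M1 M2 M \<Longrightarrow> mctx (Hole M1) (Hole M2) (Hole M)"
| "msm M1 M2 M \<Longrightarrow> mctx c1 c2 c \<Longrightarrow> mctx (InBr M1 c1 B) (InBr M2 c2 B) (InBr M c B)"

inductive derivable :: "fm \<Rightarrow> aseq \<Rightarrow> bool" where
  ax: "wf_seq (fill G {#F (NAt a), F (At a)#}) \<Longrightarrow>
       erase_seq (fill G {#F (NAt a), F (At a)#}) = fill G {#F (NAt a), F (At a)#} \<Longrightarrow>
       derivable Ac (fill G {#F (NAt a), F (At a)#})"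
| conj: "derivable Ac (fill G1 {#fmi A S1#}) \<Longrightarrow> derivable Ac (fill G2 {#fmi B S2#}) \<Longrightarrow>
       mctx G1 G2 G \<Longrightarrow> derivable Ac (fill G {#F (And A B)#})"
| disj: "derivable Ac (fill G {#fmi A S1, fmi B S2#}) \<Longrightarrow> derivable Ac (fill G {#F (Or A B)#})"
| box: "derivable Ac (fill G {#Br {#D (neg A) S, fmi A S'#} A#}) \<Longrightarrow>
       derivable Ac (fill G {#F (Box A)#})"
| dia: "derivable Ac (fill G (add_mset (D A S) (fill Dl {#Br (add_mset (fmi A S') Dp) B#}))) \<Longrightarrow>
       derivable Ac (fill G (add_mset (D A (finsert B S)) (fill Dl {#Br Dp B#})))"
| cut: "derivable Ac (fill G1 {#fmi Ac S1#}) \<Longrightarrow> derivable Ac (fill G2 {#fmi (neg Ac) S2#}) \<Longrightarrow>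
       mctx G1 G2 G \<Longrightarrow> derivable Ac (fill G {#})"

end

theory Submission
  imports Defs
begin

text \<open>Call \<open>dia_lift\<close> the step that moves one \<open>\<Diamond>\<close>-formula occurrence, with its
  annotation, out of the bracket immediately enclosing it. The set of derivable sequents is closed
  under this step: its instances in the conclusion of any rule can be traced back to instances in
  the premises (for the two-premise rules through the merging of annotations, for the
  \<open>\<Diamond>\<close>-rule also when the moved formula is the principal one), and it preserves the
  side conditions of the axiom. Iterating it carries \<open>\<Diamond>A\<^sup>\<bottom>\<^sub>\<Sigma>\<close> out of
  \<open>\<Delta>{-}\<close> with all annotations untouched, so both contexts can be kept as they are. Neither the
  cut formula nor well-formedness plays any role.\<close>

inductive dia_lift :: "aseq \<Rightarrow> aseq \<Rightarrow> bool" where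
  lift_out: "dia_lift (add_mset (Br (add_mset (D A S) M) B) N)
                      (add_mset (D A S) (add_mset (Br M B) N))"
| lift_in: "dia_lift M M' \<Longrightarrow> dia_lift (add_mset (Br M B) N) (add_mset (Br M' B) N)"

primrec ctx_plus :: "'a item multiset \<Rightarrow> 'a ctx \<Rightarrow> 'a ctx" where
  "ctx_plus M (Hole K) = Hole (M + K)"
| "ctx_plus M (InBr K c B) = InBr (M + K) c B"

primrec ctx_comp :: "'a ctx \<Rightarrow> 'a ctx \<Rightarrow> 'a ctx" where
  "ctx_comp (Hole M) c = ctx_plus M c"
| "ctx_comp (InBr M g B) c = InBr M (ctx_comp g c) B"

lemma fill_ctx_plus [simp]: "fill (ctx_plus M c) Q = M + fill c Q"
  by (cases c) auto

lemma fill_ctx_comp [simp]: "fill (ctx_comp g c) Q = fill g (fill c Q)"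
  by (induction g) auto

lemma dia_lift_union_right: "dia_lift M M' \<Longrightarrow> dia_lift (M + N) (M' + N)"
proof (induction rule: dia_lift.induct)
  case (lift_out A S M B N0)
  show ?case using dia_lift.lift_out[of A S M B "N0 + N"] by simp
next
  case (lift_in M M' B N0)
  then show ?case using dia_lift.lift_in[of M M' B "N0 + N"] by simp
qed

lemma dia_lift_union_left: "dia_lift M M' \<Longrightarrow> dia_lift (N + M) (N + M')"
  by (metis dia_lift_union_right add.commute)

lemma dia_lift_add_mset: "dia_lift M M' \<Longrightarrow> dia_lift (add_mset x M) (add_mset x M')"
  using dia_lift_union_left[of M M' "{#x#}"] by simp

lemma dia_lift_fill: "dia_lift P P' \<Longrightarrow> dia_lift (fill G P) (fill G P')"
  by (induction G) (auto intro: dia_lift_union_left dia_lift.lift_in)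

lemma dia_lift_out_of_bracket:
  "dia_lift (fill G (add_mset (Br (add_mset (D A S) M) B) N))
            (fill G (add_mset (D A S) (add_mset (Br M B) N)))"
  by (intro dia_lift_fill dia_lift.lift_out)

lemma dia_lift_has_bracket: "dia_lift X Y \<Longrightarrow> \<exists>M B. Br M B \<in># X"
  by (induction rule: dia_lift.induct) auto

lemma add_mset_eq_unionE:
  assumes "add_mset x N = M + P"
  obtains (left) M0 where "M = add_mset x M0" "N = M0 + P"
    | (right) P0 where "P = add_mset x P0" "N = M + P0"
proof -
  have "x \<in># M + P" using assms by (metis union_single_eq_member)
  then show thesis
    using assms that by (auto dest!: multi_member_split)
qed

lemma dia_lift_unionE:
  assumes "dia_lift (M + P) Y"
  obtains (left) M' where "dia_lift M M'" "Y = M' + P"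
    | (right) P' where "dia_lift P P'" "Y = M + P'"
  using assms
proof cases
  case (lift_out A S K B N)
  from lift_out(1)[symmetric] show thesis
  proof (cases rule: add_mset_eq_unionE)
    case (left M0)
    then show thesis using lift_out that(1)[of "add_mset (D A S) (add_mset (Br K B) M0)"]
      by (simp add: dia_lift.lift_out)
  next
    case (right P0)
    then show thesis using lift_out that(2)[of "add_mset (D A S) (add_mset (Br K B) P0)"]
      by (simp add: dia_lift.lift_out)
  qed
next
  case (lift_in K K' B N)
  from lift_in(1)[symmetric] show thesis
  proof (cases rule: add_mset_eq_unionE)
    case (left M0)
    then show thesis using lift_in that(1)[of "add_mset (Br K' B) M0"]
      by (simp add: dia_lift.lift_in)
  next
    case (right P0)
    then show thesis using lift_in that(2)[of "add_mset (Br K' B) P0"]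
      by (simp add: dia_lift.lift_in)
  qed
qed

lemma dia_lift_single_bracketE:
  assumes "dia_lift {#Br Z B#} W"
  obtains (out) A S Z0 where "Z = add_mset (D A S) Z0" "W = {#D A S, Br Z0 B#}"
    | (inside) Z' where "dia_lift Z Z'" "W = {#Br Z' B#}"
  using assms by cases auto

lemma dia_lift_add_bracketE:
  assumes "dia_lift (add_mset (Br Z B) M) Y"
  obtains (side) M' where "dia_lift M M'" "Y = add_mset (Br Z B) M'"
    | (inside) Z' where "dia_lift Z Z'" "Y = add_mset (Br Z' B) M"
    | (out) A S Z0 where "Z = add_mset (D A S) Z0" "Y = add_mset (D A S) (add_mset (Br Z0 B) M)"
proof -
  from assms have "dia_lift ({#Br Z B#} + M) Y" by simp
  then show thesis
  proof (cases rule: dia_lift_unionE)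
    case (left W)
    then show thesis
      by (cases rule: dia_lift_single_bracketE) (use that in auto)
  qed (use that in simp)
qed

lemma dia_lift_add_diaE:
  assumes "dia_lift (add_mset (D A S) Z) W"
  obtains Z' where "dia_lift Z Z'" "W = add_mset (D A S) Z'"
proof -
  from assms have "dia_lift ({#D A S#} + Z) W" by simp
  then show thesis
    by (cases rule: dia_lift_unionE) (use that dia_lift_has_bracket in fastforce)+
qed

lemma fill_eq_add_mset_diaE:
  assumes "add_mset (D A S) Z = fill c P"
  obtains (ctx) c0 where "c = ctx_plus {#D A S#} c0" "Z = fill c0 P"
    | (hole) K P0 where "c = Hole K" "P = add_mset (D A S) P0" "Z = K + P0"
proof (cases c)
  case (Hole K)
  with assms have "add_mset (D A S) Z = K + P" by simp
  then show thesis
  proof (cases rule: add_mset_eq_unionE)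
    case (left K0)
    then show thesis using Hole that(1)[of "Hole K0"] by simp
  next
    case (right P0)
    then show thesis using Hole that(2) by simp
  qed
next
  case (InBr K c' B)
  with assms have "D A S \<in># K" by (metis insert_noteq_member item.distinct(6) fill.simps(2))
  then obtain K0 where "K = add_mset (D A S) K0" by (metis multi_member_split)
  then show thesis using InBr assms that(1)[of "InBr K0 c' B"] by simp
qed

inductive dia_lift_ctx :: "actx \<Rightarrow> actx \<Rightarrow> bool" where
  hole: "dia_lift M M' \<Longrightarrow> dia_lift_ctx (Hole M) (Hole M')"
| side: "dia_lift M M' \<Longrightarrow> dia_lift_ctx (InBr M c B) (InBr M' c B)"
| inside: "dia_lift_ctx c c' \<Longrightarrow> dia_lift_ctx (InBr M c B) (InBr M c' B)"
| out: "dia_lift_ctx (InBr M (ctx_plus {#D A S#} c) B) (InBr (add_mset (D A S) M) c B)"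

lemma dia_lift_ctx_fill: "dia_lift_ctx G G' \<Longrightarrow> dia_lift (fill G Q) (fill G' Q)"
proof (induction rule: dia_lift_ctx.induct)
  case (out M A S c B)
  show ?case using dia_lift.lift_out[of A S "fill c Q" B M] by (simp add: add_mset_commute)
qed (auto intro: dia_lift_union_right dia_lift_add_mset dia_lift.lift_in)

lemma dia_lift_fillE [consumes 1, case_names ctx hole across]:
  "dia_lift (fill G P) Y \<Longrightarrow>
    (\<And>G'. dia_lift_ctx G G' \<Longrightarrow> Y = fill G' P \<Longrightarrow> thesis) \<Longrightarrow>
    (\<And>P'. dia_lift P P' \<Longrightarrow> Y = fill G P' \<Longrightarrow> thesis) \<Longrightarrow>
    (\<And>G0 N K B A S P0. G = ctx_comp G0 (InBr N (Hole K) B) \<Longrightarrow> P = add_mset (D A S) P0 \<Longrightarrow>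
       Y = fill G0 (add_mset (D A S) (add_mset (Br (K + P0) B) N)) \<Longrightarrow> thesis) \<Longrightarrow> thesis"
proof (induction G arbitrary: Y thesis)
  case (Hole M)
  from Hole.prems(1) have "dia_lift (M + P) Y" by simp
  then show ?case
    by (cases rule: dia_lift_unionE) (auto intro: Hole.prems dia_lift_ctx.hole)
next
  case (InBr M c B)
  from InBr.prems(1) have "dia_lift (add_mset (Br (fill c P) B) M) Y" by simp
  then show ?case
  proof (cases rule: dia_lift_add_bracketE)
    case (side M')
    then show ?thesis by (auto intro: InBr.prems dia_lift_ctx.side)
  next
    case (inside Z)
    show ?thesis
    proof (rule InBr.IH[OF inside(1)], goal_cases)
      case (1 c')
      then show ?thesis using inside by (auto intro: InBr.prems dia_lift_ctx.inside)
    next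
      case (2 P')
      then show ?thesis using inside by (auto intro: InBr.prems)
    next
      case (3 G0 N K B' A S P0)
      then show ?thesis using inside InBr.prems(4)[of "InBr M G0 B"] by simp
    qed
  next
    case (out A S Z0)
    from out(1)[symmetric] show ?thesis
    proof (cases rule: fill_eq_add_mset_diaE)
      case (ctx c0)
      then show ?thesis using out by (auto intro: InBr.prems dia_lift_ctx.out)
    next
      case (hole K P0)
      then show ?thesis using out InBr.prems(4)[of "Hole {#}"] by simp
    qed
  qed
qed

lemma msm_memberD:
  "msm M1 M2 M \<Longrightarrow> c \<in># M \<Longrightarrow> \<exists>a b M1' M2' M'. M1 = add_mset a M1' \<and> M2 = add_mset b M2' \<and>
     M = add_mset c M' \<and> mi a b c \<and> msm M1' M2' M'"
proof (induction rule: mi_msm.inducts(2)[where ?P1.0 = "\<lambda>_ _ _. True"])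
  case (5 a b c0 M1 M2 M)
  show ?case
  proof (cases "c = c0")
    case True
    then show ?thesis using "5.hyps" by blast
  next
    case False
    with "5.prems" obtain a' b' M1' M2' M' where IH: "M1 = add_mset a' M1'" "M2 = add_mset b' M2'"
        "M = add_mset c M'" "mi a' b' c" "msm M1' M2' M'"
      using "5.IH" by auto
    then have "msm (add_mset a M1') (add_mset b M2') (add_mset c0 M')"
      using "5.hyps" by (simp add: mi_msm.intros)
    with IH show ?thesis
      by (intro exI[of _ a'] exI[of _ b'] exI[of _ "add_mset a M1'"] exI[of _ "add_mset b M2'"]
          exI[of _ "add_mset c0 M'"]) (simp add: add_mset_commute)
  qed
qed auto

lemma msm_add_msetE:
  assumes "msm M1 M2 (add_mset c M)"
  obtains a b M1' M2' where "M1 = add_mset a M1'" "M2 = add_mset b M2'" "mi a b c" "msm M1' M2' M"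
  using msm_memberD[OF assms] that by force

lemma mi_DE:
  assumes "mi a b (D A S)"
  obtains S1 S2 where "a = D A S1" "b = D A S2" "S = S1 |\<union>| S2"
  using assms by cases (use that in auto)

lemma mi_BrE:
  assumes "mi a b (Br M B)"
  obtains M1 M2 where "a = Br M1 B" "b = Br M2 B" "msm M1 M2 M"
  using assms by cases (use that in auto)

lemma msm_dia_lift:
  "dia_lift M M' \<Longrightarrow> msm M1 M2 M \<Longrightarrow>
    \<exists>M1' M2'. dia_lift M1 M1' \<and> dia_lift M2 M2' \<and> msm M1' M2' M'"
proof (induction arbitrary: M1 M2 rule: dia_lift.induct)
  case (lift_out A S K B N)
  obtain K1 K2 M1' M2' where "M1 = add_mset (Br K1 B) M1'" "M2 = add_mset (Br K2 B) M2'"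
      "msm K1 K2 (add_mset (D A S) K)" "msm M1' M2' N"
    by (rule msm_add_msetE[OF lift_out]) (auto elim: mi_BrE)
  moreover obtain S1 S2 K1' K2' where "K1 = add_mset (D A S1) K1'" "K2 = add_mset (D A S2) K2'"
      "S = S1 |\<union>| S2" "msm K1' K2' K"
    by (rule msm_add_msetE[OF \<open>msm K1 K2 _\<close>]) (auto elim: mi_DE)
  ultimately have "dia_lift M1 (add_mset (D A S1) (add_mset (Br K1' B) M1'))"
    "dia_lift M2 (add_mset (D A S2) (add_mset (Br K2' B) M2'))"
    "msm (add_mset (D A S1) (add_mset (Br K1' B) M1')) (add_mset (D A S2) (add_mset (Br K2' B) M2'))
       (add_mset (D A S) (add_mset (Br K B) N))"
    by (auto intro: dia_lift.lift_out intro!: mi_msm.intros)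
  then show ?case by blast
next
  case (lift_in K K' B N)
  obtain K1 K2 M1' M2' where "M1 = add_mset (Br K1 B) M1'" "M2 = add_mset (Br K2 B) M2'"
      "msm K1 K2 K" "msm M1' M2' N"
    by (rule msm_add_msetE[OF lift_in.prems]) (auto elim: mi_BrE)
  moreover from lift_in.IH[OF \<open>msm K1 K2 K\<close>] obtain K1' K2' where
      "dia_lift K1 K1'" "dia_lift K2 K2'" "msm K1' K2' K'" by blast
  ultimately have "dia_lift M1 (add_mset (Br K1' B) M1')" "dia_lift M2 (add_mset (Br K2' B) M2')"
    "msm (add_mset (Br K1' B) M1') (add_mset (Br K2' B) M2') (add_mset (Br K' B) N)"
    by (auto intro: dia_lift.lift_in intro!: mi_msm.intros)
  then show ?case by blast
qed

lemma mctx_ctx_plusE: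
  assumes "mctx c1 c2 (ctx_plus {#x#} c)"
  obtains x1 x2 c1' c2' where "c1 = ctx_plus {#x1#} c1'" "c2 = ctx_plus {#x2#} c2'" "mi x1 x2 x"
    "mctx c1' c2' c"
proof (cases c)
  case (Hole K)
  with assms obtain K1 K2 where "c1 = Hole K1" "c2 = Hole K2" "msm K1 K2 (add_mset x K)"
    by (auto elim: mctx.cases)
  then show thesis
    using Hole by (elim msm_add_msetE)
      (auto intro: that[where c1' = "Hole _" and c2' = "Hole _"] mctx.intros)
next
  case (InBr K d B)
  with assms obtain K1 K2 d1 d2 where "c1 = InBr K1 d1 B" "c2 = InBr K2 d2 B"
      "msm K1 K2 (add_mset x K)" "mctx d1 d2 d"
    by (auto elim: mctx.cases)
  then show thesis
    using InBr by (elim msm_add_msetE)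
      (auto intro: that[where c1' = "InBr _ d1 B" and c2' = "InBr _ d2 B"] mctx.intros)
qed

lemma mctx_dia_lift_ctx:
  "dia_lift_ctx G G' \<Longrightarrow> mctx G1 G2 G \<Longrightarrow>
    \<exists>G1' G2'. dia_lift_ctx G1 G1' \<and> dia_lift_ctx G2 G2' \<and> mctx G1' G2' G'"
proof (induction arbitrary: G1 G2 rule: dia_lift_ctx.induct)
  case (hole M M')
  then obtain M1 M2 where "G1 = Hole M1" "G2 = Hole M2" "msm M1 M2 M"
    by (auto elim: mctx.cases)
  with msm_dia_lift[OF hole.hyps] show ?case
    by (blast intro: dia_lift_ctx.hole mctx.intros)
next
  case (side M M' c B)
  then obtain M1 M2 c1 c2 where "G1 = InBr M1 c1 B" "G2 = InBr M2 c2 B" "msm M1 M2 M" "mctx c1 c2 c"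
    by (auto elim: mctx.cases)
  with msm_dia_lift[OF side.hyps] show ?case
    by (blast intro: dia_lift_ctx.side mctx.intros)
next
  case (inside c c' M B)
  then obtain M1 M2 c1 c2 where "G1 = InBr M1 c1 B" "G2 = InBr M2 c2 B" "msm M1 M2 M" "mctx c1 c2 c"
    by (auto elim: mctx.cases)
  with inside.IH show ?case
    by (blast intro: dia_lift_ctx.inside mctx.intros)
next
  case (out M A S c B)
  then obtain M1 M2 c1 c2 where G: "G1 = InBr M1 c1 B" "G2 = InBr M2 c2 B" "msm M1 M2 M"
      "mctx c1 c2 (ctx_plus {#D A S#} c)"
    by (auto elim: mctx.cases)
  from G(4) obtain S1 S2 c1' c2' where c: "c1 = ctx_plus {#D A S1#} c1'" "c2 = ctx_plus {#D A S2#} c2'"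
      "S = S1 |\<union>| S2" "mctx c1' c2' c"
    by (elim mctx_ctx_plusE mi_DE) auto
  have "mctx (InBr (add_mset (D A S1) M1) c1' B) (InBr (add_mset (D A S2) M2) c2' B)
      (InBr (add_mset (D A S) M) c B)"
    using G(3) c(4) unfolding c(3) by (intro mctx.intros mi_msm.intros)
  moreover have "dia_lift_ctx G1 (InBr (add_mset (D A S1) M1) c1' B)"
    "dia_lift_ctx G2 (InBr (add_mset (D A S2) M2) c2' B)"
    unfolding G(1,2) c(1,2) by (rule dia_lift_ctx.out)+
  ultimately show ?case by blast
qed

lemma dia_lift_fill_bracketE:
  assumes "dia_lift (fill Dl {#Br Dp B#}) Z"
  obtains Dl' Dp' where "Z = fill Dl' {#Br Dp' B#}"
    "\<And>x. dia_lift (fill Dl {#Br (add_mset x Dp) B#}) (fill Dl' {#Br (add_mset x Dp') B#})"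
  using assms
proof (cases rule: dia_lift_fillE)
  case (ctx Dl')
  then show thesis by (intro that[of Dl' Dp]) (simp_all add: dia_lift_ctx_fill)
next
  case (hole P')
  from hole(1) show thesis
  proof (cases rule: dia_lift_single_bracketE)
    case (out A S Dp0)
    have "dia_lift (fill Dl {#Br (add_mset x Dp) B#}) (fill Dl {#D A S, Br (add_mset x Dp0) B#})" for x
      using dia_lift_out_of_bracket[of Dl A S "add_mset x Dp0" B "{#}"] out(1)
      by (simp add: add_mset_commute)
    then show thesis
      using hole(2) out(2) by (intro that[of "ctx_comp Dl (Hole {#D A S#})" Dp0]) (simp_all add: add_mset_commute)
  next
    case (inside Dp')
    have "dia_lift (fill Dl {#Br (add_mset x Dp) B#}) (fill Dl {#Br (add_mset x Dp') B#})" for x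
      using dia_lift.lift_in[OF dia_lift_add_mset[OF inside(1)], where B = B and N = "{#}"]
      by (simp add: dia_lift_fill)
    then show thesis
      using hole(2) inside(2) by (intro that[of Dl Dp']) simp_all
  qed
qed auto

lemma dia_lift_dia_ruleE:
  assumes "dia_lift (fill G (add_mset (D A S) (fill Dl {#Br Dp B#}))) Y"
  obtains G' Dl' Dp' where "Y = fill G' (add_mset (D A S) (fill Dl' {#Br Dp' B#}))"
    "\<And>S' x. dia_lift (fill G (add_mset (D A S') (fill Dl {#Br (add_mset x Dp) B#})))
                     (fill G' (add_mset (D A S') (fill Dl' {#Br (add_mset x Dp') B#})))"
  using assms
proof (cases rule: dia_lift_fillE)
  case (ctx G')
  then show thesis by (intro that[of G' Dl Dp]) (simp_all add: dia_lift_ctx_fill)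
next
  case (hole P')
  then obtain Z where Z: "dia_lift (fill Dl {#Br Dp B#}) Z" "P' = add_mset (D A S) Z"
    by (auto elim: dia_lift_add_diaE)
  obtain Dl' Dp' where "Z = fill Dl' {#Br Dp' B#}"
    "\<And>x. dia_lift (fill Dl {#Br (add_mset x Dp) B#}) (fill Dl' {#Br (add_mset x Dp') B#})"
    by (rule dia_lift_fill_bracketE[OF Z(1)]) (rule that)
  with hole(2) \<open>P' = _\<close> show thesis
    by (intro that[of G Dl' Dp'] dia_lift_fill dia_lift_add_mset) simp_all
next
  case (across G0 N K B0 A0 S0 P0)
  show thesis
  proof (cases "D A0 S0 = D A S")
    case True
    with across have "Y = fill G0 (add_mset (D A S) (fill (InBr N (ctx_plus K Dl) B0) {#Br Dp B#}))"
      by simp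
    moreover have "dia_lift (fill G (add_mset (D A S') (fill Dl {#Br (add_mset x Dp) B#})))
        (fill G0 (add_mset (D A S') (fill (InBr N (ctx_plus K Dl) B0) {#Br (add_mset x Dp) B#})))"
      for S' x
      using across(1) dia_lift_out_of_bracket[of G0 A S' "K + fill Dl {#Br (add_mset x Dp) B#}" B0 N]
      by simp
    ultimately show thesis by (rule that)
  next
    case False
    with across(2) obtain Z where Z: "add_mset (D A0 S0) Z = fill Dl {#Br Dp B#}"
      "P0 = add_mset (D A S) Z"
      by (auto simp: add_eq_conv_ex)
    from Z(1) obtain Dl0 where Dl0: "Dl = ctx_plus {#D A0 S0#} Dl0" "Z = fill Dl0 {#Br Dp B#}"
      by (cases rule: fill_eq_add_mset_diaE) auto
    let ?G' = "ctx_comp G0 (InBr (add_mset (D A0 S0) N) (Hole K) B0)"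
    have "Y = fill ?G' (add_mset (D A S) (fill Dl0 {#Br Dp B#}))"
      using across(3) Z(2) Dl0(2) by (simp add: add_mset_commute)
    moreover have "dia_lift (fill G (add_mset (D A S') (fill Dl {#Br (add_mset x Dp) B#})))
        (fill ?G' (add_mset (D A S') (fill Dl0 {#Br (add_mset x Dp) B#})))" for S' x
      using across(1) Dl0(1) dia_lift_out_of_bracket[of G0 A0 S0
          "K + add_mset (D A S') (fill Dl0 {#Br (add_mset x Dp) B#})" B0 N]
      by (simp add: add_mset_commute)
    ultimately show thesis by (rule that)
  qed
qed

lemma dia_lift_fill_formulasE:
  assumes "dia_lift (fill G P) Y" "\<forall>x\<in>#P. \<exists>C. x = F C"
  obtains G' where "dia_lift_ctx G G'" "Y = fill G' P"
  using assms(1)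
proof (cases rule: dia_lift_fillE)
  case (hole P')
  then show thesis using assms(2) by (auto dest: dia_lift_has_bracket)
next
  case (across G0 N K B A S P0)
  then show thesis using assms(2) by auto
qed (rule that)

lemma image_mset_map_item_const_eq_iff:
  "image_mset (map_item (\<lambda>_. c)) M = M \<longleftrightarrow> (\<forall>x\<in>#M. map_item (\<lambda>_. c) x = x)"
proof
  assume fixed: "image_mset (map_item (\<lambda>_. c)) M = M"
  show "\<forall>x\<in>#M. map_item (\<lambda>_. c) x = x"
  proof
    fix x assume "x \<in># M"
    then have "x \<in># image_mset (map_item (\<lambda>_. c)) M" by (simp only: fixed)
    then obtain y where "y \<in># M" "x = map_item (\<lambda>_. c) y" by auto
    then show "map_item (\<lambda>_. c) x = x" by (simp add: item.map_comp o_def)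
  qed
qed (simp add: multiset.map_ident_strong)

lemma dia_lift_erase_seq: "dia_lift X Y \<Longrightarrow> erase_seq X = X \<Longrightarrow> erase_seq Y = Y"
  unfolding erase_seq_def image_mset_map_item_const_eq_iff
  by (induction rule: dia_lift.induct)
    (auto simp: image_mset_map_item_const_eq_iff simp del: image_mset_add_mset)

lemma wf_item_Br_iff: "wf_item (Br M B) \<longleftrightarrow> (\<forall>x\<in>#M. wf_item x)"
  by (auto intro: wf_item.intros elim: wf_item.cases)

lemma dia_lift_wf_seq: "dia_lift X Y \<Longrightarrow> wf_seq X \<Longrightarrow> wf_seq Y"
  unfolding wf_seq_def
  by (induction rule: dia_lift.induct) (auto simp: wf_item_Br_iff intro: wf_item.intros)

lemma derivable_dia_lift: "derivable Ac X \<Longrightarrow> dia_lift X Y \<Longrightarrow> derivable Ac Y"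
proof (induction arbitrary: Y rule: derivable.induct)
  case (ax G a Ac)
  obtain G' where "Y = fill G' {#F (NAt a), F (At a)#}"
    using ax.prems by (rule dia_lift_fill_formulasE) auto
  moreover have "wf_seq Y" "erase_seq Y = Y"
    using ax dia_lift_wf_seq dia_lift_erase_seq by blast+
  ultimately show ?case by (simp add: derivable.ax)
next
  case (conj Ac G1 A S1 G2 B S2 G)
  obtain G' where G': "dia_lift_ctx G G'" "Y = fill G' {#F (And A B)#}"
    using conj.prems by (rule dia_lift_fill_formulasE) auto
  from mctx_dia_lift_ctx[OF G'(1) conj.hyps(3)] obtain G1' G2' where
    G12: "dia_lift_ctx G1 G1'" "dia_lift_ctx G2 G2'" "mctx G1' G2' G'" by blast
  have "derivable Ac (fill G1' {#fmi A S1#})" "derivable Ac (fill G2' {#fmi B S2#})"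
    using conj.IH G12(1,2) by (blast intro: dia_lift_ctx_fill)+
  then show ?case unfolding G'(2) using G12(3) by (rule derivable.conj)
next
  case (disj Ac G A S1 B S2)
  obtain G' where G': "dia_lift_ctx G G'" "Y = fill G' {#F (Or A B)#}"
    using disj.prems by (rule dia_lift_fill_formulasE) auto
  have "derivable Ac (fill G' {#fmi A S1, fmi B S2#})"
    using disj.IH dia_lift_ctx_fill[OF G'(1)] .
  then show ?case unfolding G'(2) by (rule derivable.disj)
next
  case (box Ac G A S S')
  obtain G' where G': "dia_lift_ctx G G'" "Y = fill G' {#F (Box A)#}"
    using box.prems by (rule dia_lift_fill_formulasE) auto
  have "derivable Ac (fill G' {#Br {#D (neg A) S, fmi A S'#} A#})"
    using box.IH dia_lift_ctx_fill[OF G'(1)] .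
  then show ?case unfolding G'(2) by (rule derivable.box)
next
  case (dia Ac G A S Dl S' Dp B)
  obtain G' Dl' Dp' where Y: "Y = fill G' (add_mset (D A (finsert B S)) (fill Dl' {#Br Dp' B#}))"
    and lift: "\<And>S'' x. dia_lift (fill G (add_mset (D A S'') (fill Dl {#Br (add_mset x Dp) B#})))
                     (fill G' (add_mset (D A S'') (fill Dl' {#Br (add_mset x Dp') B#})))"
    by (rule dia_lift_dia_ruleE[OF dia.prems]) (rule that)
  have "derivable Ac (fill G' (add_mset (D A S) (fill Dl' {#Br (add_mset (fmi A S') Dp') B#})))"
    by (rule dia.IH[OF lift])
  then show ?case unfolding Y by (rule derivable.dia)
next
  case (cut Ac G1 S1 G2 S2 G)
  obtain G' where G': "dia_lift_ctx G G'" "Y = fill G' {#}"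
    using cut.prems by (rule dia_lift_fill_formulasE) auto
  from mctx_dia_lift_ctx[OF G'(1) cut.hyps(3)] obtain G1' G2' where
    G12: "dia_lift_ctx G1 G1'" "dia_lift_ctx G2 G2'" "mctx G1' G2' G'" by blast
  have "derivable Ac (fill G1' {#fmi Ac S1#})" "derivable Ac (fill G2' {#fmi (neg Ac) S2#})"
    using cut.IH G12(1,2) by (blast intro: dia_lift_ctx_fill)+
  then show ?case unfolding G'(2) using G12(3) by (rule derivable.cut)
qed

lemma derivable_dia_lift_rtranclp: "dia_lift\<^sup>*\<^sup>* X Y \<Longrightarrow> derivable Ac X \<Longrightarrow> derivable Ac Y"
  by (induction rule: rtranclp_induct) (auto intro: derivable_dia_lift)

lemma dia_lift_rtranclp_to_top:
  "dia_lift\<^sup>*\<^sup>* (fill G (fill Dl {#D A S#})) (fill G (add_mset (D A S) (fill Dl {#})))"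
proof (induction Dl arbitrary: G)
  case (InBr M c B)
  have "dia_lift\<^sup>*\<^sup>* (fill (ctx_comp G (InBr M (Hole {#}) B)) (fill c {#D A S#}))
                     (fill (ctx_comp G (InBr M (Hole {#}) B)) (add_mset (D A S) (fill c {#})))"
    by (rule InBr.IH)
  moreover have "dia_lift (fill G (add_mset (Br (add_mset (D A S) (fill c {#})) B) M))
                         (fill G (add_mset (D A S) (add_mset (Br (fill c {#}) B) M)))"
    by (rule dia_lift_out_of_bracket)
  ultimately show ?case by (simp add: rtranclp.rtrancl_into_rtrancl)
qed simp

theorem mainTheorem5:
  fixes A :: fm and G Dl :: actx and \<Sigma> :: "fm fset"
  assumes "wf_ctx G" and "wf_ctx Dl"
    and "derivable A (fill G (fill Dl {#D (neg A) \<Sigma>#}))"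
  shows "\<exists>G' Dl'. erase_ctx G' = erase_ctx G \<and> erase_ctx Dl' = erase_ctx Dl \<and>
           derivable A (fill G' (add_mset (D (neg A) \<Sigma>) (fill Dl' {#})))"
proof -
  have "derivable A (fill G (add_mset (D (neg A) \<Sigma>) (fill Dl {#})))"
    using derivable_dia_lift_rtranclp[OF dia_lift_rtranclp_to_top assms(3)] .
  then show ?thesis by blast
qed

end
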